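(* Let $k\ge 1$ and $n\ge 2k+1$. The map $f:X_{n,k}\to X_{n,k}$ is a bijection, and for every $x\in X_{n,k}$ the strings $x$ and $f(x)$ have no $1$ at a common position, $f(x)\neq x$ and $f^2(x)\ne x$. Consequently, for every $x\in X_{n,k}$ the sequence $C(x)=(x,f(x),f^2(x),\dots)$, continued until $x$ reappears, is a cycle of length at least $3$ in $K(n,k)$ (vertices identified with characteristic vectors), and these cycles partition the vertex set.
   Context: $X_{n,k}$ is the set of binary strings of length $n$ with exactly $k$ ones; a $k$-subset of $[n]$ is identified with its characteristic vector, so two vertices of the Kneser graph $K(n,k)$ are adjacent iff their strings have no $1$ at a common position. Positions are taken cyclically modulo $n$. Cyclic parenthesis matching: regard $x$ as a cyclic string, $1$s as opening and $0$s as closing brackets; each $1$ at position $i$ is matched to the last $0$ of the shortest cyclic substring starting at position $i$ and going to the right that contains equally many $0$s and $1$s. Since $n\ge 2k+1$, every $1$ is matched and exactly $n-2k$ zeros are unmatched. $f(x)$ is obtained from $x$ by complementing all matched bits (matched $1$s and matched $0$s), leaving unmatched $0$s unchanged. *)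

theory Defs
  imports Main
begin

text \<open>Binary strings are bool lists (True = 1, False = 0); positions are
  0..<n and are read cyclically modulo n.\<close>

definition X :: "nat \<Rightarrow> nat \<Rightarrow> bool list set" where
  "X n k = {x. length x = n \<and> count_list x True = k}"

definition kneser_adj :: "bool list \<Rightarrow> bool list \<Rightarrow> bool" where
  "kneser_adj x y \<longleftrightarrow> length x = length y \<and> (\<forall>j < length x. \<not> (x ! j \<and> y ! j))"

definition cyc_ones :: "bool list \<Rightarrow> nat \<Rightarrow> nat \<Rightarrow> nat" where
  "cyc_ones x i l = card {t. t < l \<and> x ! ((i + t) mod length x)}"

definition cyc_balanced :: "bool list \<Rightarrow> nat \<Rightarrow> nat \<Rightarrow> bool" where
  "cyc_balanced x i l \<longleftrightarrow> 0 < l \<and> l \<le> length x \<and> 2 * cyc_ones x i l = l"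

definition has_match :: "bool list \<Rightarrow> nat \<Rightarrow> bool" where
  "has_match x i \<longleftrightarrow> (\<exists>l. cyc_balanced x i l)"

definition match_len :: "bool list \<Rightarrow> nat \<Rightarrow> nat" where
  "match_len x i = (LEAST l. cyc_balanced x i l)"

text \<open>Position of the 0 matched to the 1 at position i (last position of that substring).\<close>
definition mate :: "bool list \<Rightarrow> nat \<Rightarrow> nat" where
  "mate x i = (i + match_len x i - 1) mod length x"

definition matched :: "bool list \<Rightarrow> nat \<Rightarrow> bool" where
  "matched x j \<longleftrightarrow> (x ! j \<and> has_match x j) \<or>
     (\<exists>i < length x. x ! i \<and> has_match x i \<and> mate x i = j)"

definition f :: "bool list \<Rightarrow> bool list" where
  "f x = map (\<lambda>j. if matched x j then \<not> x ! j else x ! j) [0..<length x]"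

definition orbit :: "bool list \<Rightarrow> bool list set" where
  "orbit x = {(f ^^ i) x | i. True}"

end

theory Submission
  imports Defs
begin

text \<open>Let the balance of a cyclic window be its number of 1s minus its number of 0s. A 1 at
  position i is matched to the end of the first window starting at i whose balance is 0; since
  there are fewer 1s than 0s, such a window exists, and along it the balance stays positive. The
  mates are distinct 0s, and every position inside the window from i to its mate is itself
  matched, so f complements these windows and moves every 1 onto its mate. In particular f(x) has
  as many 1s as x and none in common with it.

  Reading f(x) from right to left, with 1s as opening brackets, the complemented window shows that
  the 1 at the mate of i is matched back to i; so x can be recovered from f(x), and f is a
  permutation of the finite set X(n,k). For f(f(x)) \<noteq> x, fix an unmatched position u: a window
  never passes over u, so the cyclic distance from u strictly increases from a 1 to its mate.
  Starting from the 1 of x farthest from u, two applications of f would produce a 1 of f(f(x)) = x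
  that is farther still. The cycles and the partition into orbits are then general facts about
  permutations of finite sets.\<close>

lemma discrete_ivt:
  fixes h :: "nat \<Rightarrow> int"
  assumes unit: "\<And>t. \<bar>h (Suc t) - h t\<bar> \<le> 1" and "a \<le> b" and "h a \<le> c" and "c \<le> h b"
  shows "\<exists>t. a \<le> t \<and> t \<le> b \<and> h t = c"
  using \<open>a \<le> b\<close> \<open>c \<le> h b\<close>
proof (induction b rule: dec_induct)
  case base
  then show ?case using \<open>h a \<le> c\<close> by auto
next
  case (step m)
  show ?case
  proof (cases "c \<le> h m")
    case True
    then show ?thesis using step.IH by fastforce
  next
    case False
    then have "h (Suc m) = c" using unit[of m] step.prems by auto
    then show ?thesis using step.hyps by (intro exI[of _ "Suc m"]) auto
  qed
qed

lemma discrete_last_visit: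
  fixes h :: "nat \<Rightarrow> int"
  assumes unit: "\<And>t. \<bar>h (Suc t) - h t\<bar> \<le> 1" and "a \<le> b" and "h a \<le> c" and "c < h b"
  obtains r where "a \<le> r" "r < b" "h r = c" "\<And>s. r < s \<Longrightarrow> s \<le> b \<Longrightarrow> c < h s"
proof -
  define R where "R = {r. a \<le> r \<and> r \<le> b \<and> h r = c}"
  have "R \<noteq> {}"
    using discrete_ivt[OF unit \<open>a \<le> b\<close> \<open>h a \<le> c\<close>] \<open>c < h b\<close> by (auto simp: R_def)
  moreover have "finite R" by (simp add: R_def)
  ultimately have r: "Max R \<in> R" and r_max: "\<And>r. r \<in> R \<Longrightarrow> r \<le> Max R" by auto
  have above: "c < h s" if gt: "Max R < s" and le: "s \<le> b" for s
  proof (rule ccontr)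
    assume "\<not> c < h s"
    then obtain t where "s \<le> t" "t \<le> b" "h t = c"
      using discrete_ivt[of h s b c] unit le \<open>c < h b\<close> by fastforce
    then have "t \<in> R" using gt r by (auto simp: R_def)
    then have "t \<le> Max R" by (rule r_max)
    then show False using \<open>s \<le> t\<close> gt by simp
  qed
  have "Max R \<noteq> b" using r \<open>c < h b\<close> by (auto simp: R_def)
  then show thesis using that r above by (auto simp: R_def)
qed

lemma discrete_first_visit:
  fixes h :: "nat \<Rightarrow> int"
  assumes unit: "\<And>t. \<bar>h (Suc t) - h t\<bar> \<le> 1" and "a \<le> b" and "c < h a" and "h b \<le> c"
  obtains r where "a < r" "r \<le> b" "h r = c" "\<And>s. a \<le> s \<Longrightarrow> s < r \<Longrightarrow> c < h s"
proof -
  define r where "r = (LEAST r. a \<le> r \<and> h r \<le> c)"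
  have r: "a \<le> r \<and> h r \<le> c"
    unfolding r_def by (rule LeastI[of _ b]) (use assms in simp)
  have "r \<le> b"
    unfolding r_def by (rule Least_le) (use assms in simp)
  have before: "c < h s" if "a \<le> s" "s < r" for s
    using not_less_Least[of s "\<lambda>r. a \<le> r \<and> h r \<le> c"] that unfolding r_def by auto
  have "r \<noteq> a" using r \<open>c < h a\<close> by auto
  then have "a < r" using r by simp
  then have "c < h (r - 1)" using before[of "r - 1"] by simp
  moreover have "\<bar>h r - h (r - 1)\<bar> \<le> 1" using unit[of "r - 1"] \<open>a < r\<close> by simp
  ultimately have "h r = c" using r by simp
  then show thesis using that \<open>a < r\<close> \<open>r \<le> b\<close> before by blast
qed

lemma mod_add_cancel_right_nat: "(a + c) mod n = (b + c) mod n \<Longrightarrow> a mod n = (b :: nat) mod n"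
  by (simp add: nat_mod_eq_iff add.commute)

definition balance :: "bool list \<Rightarrow> nat \<Rightarrow> nat \<Rightarrow> int" where
  "balance z i l = 2 * int (cyc_ones z i l) - int l"

lemma cyc_ones_Suc:
  "cyc_ones z i (Suc l) = cyc_ones z i l + (if z ! ((i + l) mod length z) then 1 else 0)"
proof -
  have "{t. t < Suc l \<and> z ! ((i + t) mod length z)} =
        {t. t < l \<and> z ! ((i + t) mod length z)} \<union> (if z ! ((i + l) mod length z) then {l} else {})"
    by (auto simp: less_Suc_eq)
  then show ?thesis unfolding cyc_ones_def by auto
qed

lemma balance_0 [simp]: "balance z i 0 = 0"
  by (simp add: balance_def cyc_ones_def)

lemma balance_Suc:
  "balance z i (Suc l) = balance z i l + (if z ! ((i + l) mod length z) then 1 else -1)"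
  by (simp add: balance_def cyc_ones_Suc)

lemma balance_unit_step: "\<bar>balance z i (Suc l) - balance z i l\<bar> \<le> 1"
  by (simp add: balance_Suc)

lemma balance_add: "balance z i (a + b) = balance z i a + balance z (i + a) b"
  by (induction b) (simp_all add: balance_Suc add.assoc)

lemma balance_mod_cong:
  assumes "a mod length z = b mod length z"
  shows "balance z a l = balance z b l"
proof (induction l)
  case (Suc l)
  have "(a + l) mod length z = (b + l) mod length z"
    using assms by (metis mod_add_left_eq)
  then show ?case using Suc by (simp add: balance_Suc)
qed simp

lemma balance_length: "balance z i (length z) = 2 * int (count_list z True) - int (length z)"
proof (induction i)
  case 0
  have "cyc_ones z 0 (length z) = count_list z True"
    unfolding cyc_ones_def count_list_eq_length_filter length_filter_conv_card
    by (rule arg_cong[where f = card]) auto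
  then show ?case by (simp add: balance_def)
next
  case (Suc i)
  have "balance z i (1 + length z) = balance z (Suc i) (length z) + balance z i 1"
    using balance_add[of z i 1 "length z"] by simp
  moreover have "balance z i (length z + 1) = balance z i (length z) + balance z (i + length z) 1"
    by (rule balance_add)
  moreover have "balance z (i + length z) 1 = balance z i 1"
    by (rule balance_mod_cong) simp
  ultimately show ?case using Suc by simp
qed

lemma cyc_balanced_iff: "cyc_balanced z i l \<longleftrightarrow> 0 < l \<and> l \<le> length z \<and> balance z i l = 0"
  by (auto simp: cyc_balanced_def balance_def)

lemma match_len_eqI:
  assumes "0 < l" "l \<le> length z" "balance z i l = 0"
    and "\<And>s. 0 < s \<Longrightarrow> s < l \<Longrightarrow> balance z i s \<noteq> 0"
  shows "has_match z i" "match_len z i = l"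
proof -
  show "has_match z i" using assms by (auto simp: has_match_def cyc_balanced_iff)
  show "match_len z i = l" unfolding match_len_def
  proof (rule Least_equality)
    show "cyc_balanced z i l" using assms by (simp add: cyc_balanced_iff)
  next
    fix l' assume "cyc_balanced z i l'"
    then show "l \<le> l'" using assms by (metis cyc_balanced_iff not_le)
  qed
qed

definition ones :: "bool list \<Rightarrow> nat set" where
  "ones z = {i. i < length z \<and> z ! i}"

lemma count_list_True_eq_card_ones: "count_list z True = card (ones z)"
  by (simp add: ones_def count_list_eq_length_filter length_filter_conv_card)

lemma mate_less: "0 < length z \<Longrightarrow> mate z i < length z"
  by (simp add: mate_def)

lemma length_f [simp]: "length (f z) = length z"
  by (simp add: f_def)

lemma nth_f: "j < length z \<Longrightarrow> f z ! j = (if matched z j then \<not> z ! j else z ! j)"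
  by (simp add: f_def)

locale sparse_word =
  fixes z :: "bool list"
  assumes sparse: "2 * count_list z True < length z"
begin

lemma length_pos: "0 < length z"
  using sparse by linarith

lemma first_return_of_one:
  assumes "i < length z" "z ! i"
  obtains l where "1 < l" "l \<le> length z" "balance z i l = 0"
    "\<And>s. 0 < s \<Longrightarrow> s < l \<Longrightarrow> 0 < balance z i s"
proof -
  have "balance z i 1 = 1" using balance_Suc[of z i 0] assms by simp
  moreover have "balance z i (length z) < 0" using balance_length[of z i] sparse by simp
  moreover have "1 \<le> length z" using assms(1) by simp
  ultimately obtain l where "1 < l" "l \<le> length z" "balance z i l = 0"
    "\<And>s. 1 \<le> s \<Longrightarrow> s < l \<Longrightarrow> 0 < balance z i s"
    using discrete_first_visit[of "balance z i" 1 "length z" 0] balance_unit_step by auto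
  then show thesis using that by simp
qed

lemma
  assumes "i < length z" "z ! i"
  shows has_match_one: "has_match z i"
    and match_len_ge_2: "2 \<le> match_len z i"
    and match_len_le_length: "match_len z i \<le> length z"
    and balance_match_len: "balance z i (match_len z i) = 0"
    and balance_before_match: "0 < s \<Longrightarrow> s < match_len z i \<Longrightarrow> 0 < balance z i s"
proof -
  obtain l where l: "1 < l" "l \<le> length z" "balance z i l = 0"
    "\<And>s. 0 < s \<Longrightarrow> s < l \<Longrightarrow> 0 < balance z i s"
    using first_return_of_one[OF assms] by blast
  have nonzero: "balance z i s \<noteq> 0" if "0 < s" "s < l" for s
    using l(4)[OF that] by simp
  have "0 < l" using l(1) by simp
  note match = match_len_eqI[OF this l(2,3) nonzero]
  show "has_match z i" using match(1) by simp
  show "2 \<le> match_len z i" "match_len z i \<le> length z" "balance z i (match_len z i) = 0"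
    using l match(2) by simp_all
  show "0 < s \<Longrightarrow> s < match_len z i \<Longrightarrow> 0 < balance z i s"
    using l(4) match(2) by simp
qed

lemma mate_one:
  assumes "i < length z" "z ! i"
  shows "mate z i = (i + (match_len z i - 1)) mod length z"
  using match_len_ge_2[OF assms] by (simp add: mate_def)

lemma not_nth_mate:
  assumes "i < length z" "z ! i"
  shows "\<not> z ! mate z i"
proof -
  let ?l = "match_len z i"
  have "Suc (?l - 1) = ?l" using match_len_ge_2[OF assms] by simp
  then have "balance z i ?l = balance z i (?l - 1) + (if z ! mate z i then 1 else -1)"
    using balance_Suc[of z i "?l - 1"] mate_one[OF assms] by simp
  moreover have "0 < balance z i (?l - 1)"
    using balance_before_match[OF assms] match_len_ge_2[OF assms] by simp
  ultimately show ?thesis using balance_match_len[OF assms] by (auto split: if_splits)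
qed

lemma inj_on_mate: "inj_on (mate z) (ones z)"
proof -
  have same: "j = j'"
    if j: "j \<in> ones z" and j': "j' \<in> ones z" and eq: "mate z j = mate z j'"
      and le: "match_len z j \<le> match_len z j'" for j j'
  proof (rule ccontr)
    assume "j \<noteq> j'"
    let ?n = "length z" and ?l = "match_len z j" and ?l' = "match_len z j'"
    define d where "d = ?l' - ?l"
    have j_one: "j < ?n" "z ! j" and j'_one: "j' < ?n" "z ! j'" using j j' by (auto simp: ones_def)
    have "(j' + d + (?l - 1)) mod ?n = (j + (?l - 1)) mod ?n"
      using eq mate_one[OF j_one] mate_one[OF j'_one] le match_len_ge_2[OF j_one]
      by (simp add: d_def add.assoc)
    then have shift: "(j' + d) mod ?n = j mod ?n"
      by (rule mod_add_cancel_right_nat)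
    have "d \<noteq> 0"
    proof
      assume "d = 0"
      then show False using shift \<open>j \<noteq> j'\<close> j_one j'_one by simp
    qed
    have "balance z j' ?l' = balance z j' d + balance z (j' + d) ?l"
      using balance_add[of z j' d ?l] le by (simp add: d_def)
    also have "balance z (j' + d) ?l = balance z j ?l"
      using shift by (rule balance_mod_cong)
    finally have "balance z j' d = 0"
      using balance_match_len[OF j_one] balance_match_len[OF j'_one] by simp
    moreover have "0 < balance z j' d"
      using balance_before_match[OF j'_one, of d] \<open>d \<noteq> 0\<close> match_len_ge_2[OF j_one] d_def
      by simp
    ultimately show False by simp
  qed
  show ?thesis
  proof (rule inj_onI)
    fix j j' assume "j \<in> ones z" "j' \<in> ones z" "mate z j = mate z j'"
    then show "j = j'"
      using same[of j j'] same[of j' j] by (cases "match_len z j \<le> match_len z j'") auto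
  qed
qed

lemma matched_one: "j < length z \<Longrightarrow> z ! j \<Longrightarrow> matched z j"
  using has_match_one by (simp add: matched_def)

lemma matched_iff: "matched z j \<longleftrightarrow> j \<in> ones z \<or> j \<in> mate z ` ones z"
  if "j < length z"
  using that has_match_one by (auto simp: matched_def ones_def)

lemma matched_within_match:
  assumes "i < length z" "z ! i" and "t < match_len z i"
  shows "matched z ((i + t) mod length z)"
proof -
  let ?n = "length z" and ?j = "(i + t) mod length z" and ?h = "balance z i"
  consider "z ! ?j" | "t = match_len z i - 1" | "\<not> z ! ?j" "t < match_len z i - 1"
    using assms(3) by linarith
  then show ?thesis
  proof cases
    case 1
    then show ?thesis using matched_one length_pos by simp
  next
    case 2
    then have "mate z i = ?j" using mate_one[OF assms(1,2)] by simp
    then show ?thesis using assms(1,2) has_match_one[OF assms(1,2)] by (auto simp: matched_def)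
  next
    case 3
    \<comment> \<open>The last position r \<le> t at which the walk has the height it reaches after t is a 1
      whose match ends at t.\<close>
    define c where "c = ?h (Suc t)"
    have down: "?h t = c + 1" using 3(1) balance_Suc[of z i t] by (simp add: c_def)
    have "0 < c" using balance_before_match[OF assms(1,2), of "Suc t"] 3(2) by (simp add: c_def)
    then obtain r where r: "r < t" "?h r = c" "\<And>s. r < s \<Longrightarrow> s \<le> t \<Longrightarrow> c < ?h s"
      using discrete_last_visit[of ?h 0 t c] balance_unit_step down by auto
    define i' where "i' = (i + r) mod ?n"
    have shifted: "balance z i' s = ?h (r + s) - c" for s
      using balance_add[of z i r s] r(2) balance_mod_cong[of "i + r" z i' s] by (simp add: i'_def)
    have "i' < ?n" using length_pos by (simp add: i'_def)
    have "z ! i'"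
      using balance_Suc[of z i r] r by (force simp: i'_def split: if_splits)
    have "match_len z i' = Suc t - r"
    proof (rule match_len_eqI(2))
      show "0 < Suc t - r" "balance z i' (Suc t - r) = 0"
        using r(1) shifted[of "Suc t - r"] by (simp_all add: c_def)
      show "Suc t - r \<le> ?n" using 3(2) match_len_le_length[OF assms(1,2)] by linarith
      show "balance z i' s \<noteq> 0" if "0 < s" "s < Suc t - r" for s
      proof -
        have "c < ?h (r + s)" using that by (intro r(3)) auto
        then show ?thesis using shifted[of s] by simp
      qed
    qed
    then have "mate z i' = (i' + (t - r)) mod ?n"
      using mate_one[OF \<open>i' < ?n\<close> \<open>z ! i'\<close>] by simp
    also have "\<dots> = (i + r + (t - r)) mod ?n" by (simp add: i'_def mod_add_left_eq)
    also have "i + r + (t - r) = i + t" using r(1) by simp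
    finally have "mate z i' = ?j" .
    then show ?thesis
      using \<open>i' < ?n\<close> \<open>z ! i'\<close> has_match_one unfolding matched_def by blast
  qed
qed

lemma nth_f_iff: "j < length z \<Longrightarrow> f z ! j \<longleftrightarrow> j \<in> mate z ` ones z"
  using nth_f[of j z] matched_iff[of j] not_nth_mate by (auto simp: ones_def)

lemma ones_f: "ones (f z) = mate z ` ones z"
  using nth_f_iff mate_less[OF length_pos] by (auto simp: ones_def)

lemma count_list_f: "count_list (f z) True = count_list z True"
  using inj_on_mate by (simp add: count_list_True_eq_card_ones ones_f card_image)

lemma kneser_adj_f: "kneser_adj z (f z)"
  using nth_f_iff not_nth_mate by (auto simp: kneser_adj_def ones_def)

lemma sparse_word_f: "sparse_word (f z)"
  using sparse by unfold_locales (simp add: count_list_f)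

lemma nth_f_within_match:
  assumes "i < length z" "z ! i" and "t < match_len z i"
  shows "f z ! ((i + t) mod length z) \<longleftrightarrow> \<not> z ! ((i + t) mod length z)"
  using matched_within_match[OF assms] nth_f length_pos by simp

end

lemma balance_complement:
  assumes "length y = length z"
    and "\<And>t. t < l \<Longrightarrow> y ! ((a + t) mod length z) \<longleftrightarrow> \<not> z ! ((a + t) mod length z)"
  shows "balance y a l = - balance z a l"
  using assms by (induction l) (auto simp: balance_Suc)

text \<open>The cyclic substring of length l starting at i is balanced and every proper suffix
  has more 1s than 0s: reading y from right to left, with 1s as opening brackets, the 1 at the
  last position of the substring is matched to position i.\<close>
definition back_match :: "bool list \<Rightarrow> nat \<Rightarrow> nat \<Rightarrow> bool" where
  "back_match y i l \<longleftrightarrow> 0 < l \<and> l \<le> length y \<and> balance y i l = 0 \<and>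
     (\<forall>s. 0 < s \<and> s < l \<longrightarrow> 0 < balance y (i + l - s) s)"

lemma back_match_last_one:
  assumes "back_match y i l"
  shows "y ! ((i + l - 1) mod length y)"
proof -
  have "l \<noteq> 1" using assms balance_Suc[of y i 0] by (auto simp: back_match_def split: if_splits)
  then have "0 < balance y (i + l - 1) 1" using assms by (auto simp: back_match_def)
  then show ?thesis using balance_Suc[of y "i + l - 1" 0] by (auto split: if_splits)
qed

lemma back_match_unique:
  assumes "back_match y i l" "back_match y i' l'" "i < length y" "i' < length y"
    and "(i + l - 1) mod length y = (i' + l' - 1) mod length y"
  shows "i = i'"
proof -
  have same: "i = i'"
    if bm: "back_match y i l" and bm': "back_match y i' l'" and "i < length y" "i' < length y"
      and last: "(i + l - 1) mod length y = (i' + l' - 1) mod length y" and le: "l \<le> l'"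
    for i i' l l'
  proof (rule ccontr)
    assume "i \<noteq> i'"
    define d where "d = l' - l"
    have "0 < l" using bm by (simp add: back_match_def)
    then have "(i' + d + (l - 1)) mod length y = (i + (l - 1)) mod length y"
      using last le by (simp add: d_def)
    then have shift: "(i' + d) mod length y = i mod length y"
      by (rule mod_add_cancel_right_nat)
    have "d \<noteq> 0"
    proof
      assume "d = 0"
      then show False using shift \<open>i \<noteq> i'\<close> \<open>i < length y\<close> \<open>i' < length y\<close> by simp
    qed
    then have "0 < balance y (i' + d) l"
      using bm' \<open>0 < l\<close> by (auto simp: back_match_def d_def)
    moreover have "balance y (i' + d) l = balance y i l"
      using shift by (rule balance_mod_cong)
    ultimately show False using bm by (simp add: back_match_def)
  qed
  show ?thesis
    using same[OF assms] same[OF assms(2,1,4,3) assms(5)[symmetric]] by linarith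
qed

context sparse_word
begin

lemma back_match_f:
  assumes one: "i < length z" "z ! i"
  shows "back_match (f z) i (match_len z i)"
proof -
  let ?l = "match_len z i"
  have flip: "balance (f z) (i + (?l - s)) s = - balance z (i + (?l - s)) s" if "s \<le> ?l" for s
  proof (rule balance_complement)
    fix t assume "t < s"
    then have "?l - s + t < ?l" using that by simp
    from nth_f_within_match[OF one this]
    show "f z ! ((i + (?l - s) + t) mod length z) \<longleftrightarrow> \<not> z ! ((i + (?l - s) + t) mod length z)"
      by (simp only: add.assoc)
  qed simp
  have suffix: "0 < balance (f z) (i + ?l - s) s" if "0 < s" "s < ?l" for s
  proof -
    have "balance z i ?l = balance z i (?l - s) + balance z (i + (?l - s)) s"
      using balance_add[of z i "?l - s" s] that by simp
    then have "balance z (i + (?l - s)) s < 0"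
      using balance_match_len[OF one] balance_before_match[OF one, of "?l - s"] that by simp
    then have "0 < balance (f z) (i + (?l - s)) s" using flip[of s] that by simp
    moreover have "i + (?l - s) = i + ?l - s" using that by simp
    ultimately show ?thesis by (simp only:)
  qed
  have "balance (f z) i ?l = 0" using flip[of ?l] balance_match_len[OF one] by simp
  then show ?thesis
    unfolding back_match_def
    using suffix match_len_ge_2[OF one] match_len_le_length[OF one] by simp
qed

lemma nth_iff_back_match:
  assumes "i < length z"
  shows "z ! i \<longleftrightarrow> (\<exists>l. back_match (f z) i l)"
proof
  assume "z ! i"
  then show "\<exists>l. back_match (f z) i l" using back_match_f[OF assms] by blast
next
  assume "\<exists>l. back_match (f z) i l"
  then obtain l where bm: "back_match (f z) i l" ..
  let ?m = "(i + l - 1) mod length z"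
  have "?m \<in> ones (f z)" using back_match_last_one[OF bm] length_pos by (simp add: ones_def)
  then obtain i' where "i' \<in> ones z" "mate z i' = ?m" by (auto simp: ones_f)
  then have i': "i' < length z" "z ! i'" "mate z i' = ?m" by (auto simp: ones_def)
  have "i = i'"
    using back_match_unique[OF bm back_match_f[OF i'(1,2)]] assms i' by (simp add: mate_def)
  then show "z ! i" using i' by simp
qed

end

lemma f_inject:
  assumes "sparse_word z" "sparse_word z'" "length z = length z'" and "f z = f z'"
  shows "z = z'"
proof (rule nth_equalityI)
  show "length z = length z'" by fact
  show "z ! i = z' ! i" if "i < length z" for i
    using sparse_word.nth_iff_back_match[OF assms(1) that]
      sparse_word.nth_iff_back_match[OF assms(2), of i] that assms(3,4) by simp
qed

definition cyc_rank :: "nat \<Rightarrow> nat \<Rightarrow> nat \<Rightarrow> int" where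
  "cyc_rank n u p = (int p - int u - 1) mod int n"

lemma cyc_rank_add:
  assumes "u < n" and avoid: "\<And>t. t \<le> l \<Longrightarrow> (i + t) mod n \<noteq> u"
  shows "cyc_rank n u ((i + l) mod n) = cyc_rank n u i + int l"
proof -
  define a where "a = cyc_rank n u i"
  have a: "0 \<le> a" "a < int n" using \<open>u < n\<close> by (auto simp: a_def cyc_rank_def)
  have no_wrap: "a + int l < int n"
  proof (rule ccontr)
    assume "\<not> ?thesis"
    define t where "t = nat (int n - 1 - a)"
    have "t \<le> l" using \<open>\<not> a + int l < int n\<close> a by (simp add: t_def)
    have "int ((i + t) mod n) = (int i + (int n - 1 - a)) mod int n"
      using a by (simp add: t_def zmod_int)
    also have "\<dots> = ((int i - 1 - a) + int n) mod int n"
      by (simp add: algebra_simps)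
    also have "\<dots> = (int i - 1 - a) mod int n"
      by (rule mod_add_self2)
    also have "\<dots> = (int i - 1 - (int i - int u - 1)) mod int n"
      by (simp add: a_def cyc_rank_def mod_diff_right_eq)
    also have "\<dots> = int u" using \<open>u < n\<close> by simp
    finally show False using avoid[OF \<open>t \<le> l\<close>] by simp
  qed
  have "cyc_rank n u ((i + l) mod n) = ((int i - int u - 1) + int l) mod int n"
    by (simp add: cyc_rank_def zmod_int mod_diff_left_eq algebra_simps)
  also have "\<dots> = (a + int l) mod int n"
    by (simp add: a_def cyc_rank_def mod_add_left_eq)
  also have "\<dots> = a + int l" using a no_wrap by simp
  finally show ?thesis by (simp add: a_def)
qed

context sparse_word
begin

lemma exists_unmatched:
  obtains u where "u < length z" "\<not> matched z u"
proof -
  let ?U = "ones z \<union> mate z ` ones z"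
  have fin: "finite (ones z)" by (simp add: ones_def)
  have "card ?U \<le> card (ones z) + card (mate z ` ones z)"
    by (rule card_Un_le)
  also have "\<dots> \<le> 2 * card (ones z)" using card_image_le[OF fin, of "mate z"] by simp
  also have "\<dots> < length z" using sparse by (simp add: count_list_True_eq_card_ones)
  finally have "\<not> {..<length z} \<subseteq> ?U"
    using card_mono[of ?U "{..<length z}"] fin by auto
  then show thesis using that matched_iff by auto
qed

lemma cyc_rank_mate:
  assumes "i < length z" "z ! i" and "u < length z" "\<not> matched z u"
  shows "cyc_rank (length z) u i < cyc_rank (length z) u (mate z i)"
proof -
  have avoid: "(i + t) mod length z \<noteq> u" if "t \<le> match_len z i - 1" for t
  proof -
    have "t < match_len z i" using that match_len_ge_2[OF assms(1,2)] by linarith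
    then show ?thesis using matched_within_match[OF assms(1,2)] assms(4) by auto
  qed
  have "cyc_rank (length z) u (mate z i) = cyc_rank (length z) u i + int (match_len z i - 1)"
    unfolding mate_one[OF assms(1,2)] using assms(3) avoid by (rule cyc_rank_add)
  then show ?thesis using match_len_ge_2[OF assms(1,2)] by simp
qed

lemma f_neq:
  assumes "ones z \<noteq> {}"
  shows "f z \<noteq> z"
proof
  assume "f z = z"
  obtain i where "i \<in> ones z" using assms by blast
  then show False using \<open>f z = z\<close> kneser_adj_f by (auto simp: kneser_adj_def ones_def)
qed

lemma f_f_neq:
  assumes "ones z \<noteq> {}"
  shows "f (f z) \<noteq> z"
proof
  assume ff: "f (f z) = z"
  interpret y: sparse_word "f z" by (rule sparse_word_f)
  let ?n = "length z"
  obtain u where u: "u < ?n" "\<not> matched z u" by (rule exists_unmatched)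
  then have "\<not> z ! u" "\<not> f z ! u"
    using matched_iff[OF u(1)] nth_f_iff[OF u(1)] by (auto simp: ones_def)
  then have "\<not> matched (f z) u" using nth_f[of u "f z"] ff u(1) by auto
  have fin: "finite (cyc_rank ?n u ` ones z)" by (simp add: ones_def)
  define M where "M = Max (cyc_rank ?n u ` ones z)"
  have "M \<in> cyc_rank ?n u ` ones z" using fin assms by (simp add: M_def)
  then obtain i where i: "i \<in> ones z" "cyc_rank ?n u i = M" by auto
  have greatest: "cyc_rank ?n u j \<le> M" if "j \<in> ones z" for j
    using fin that by (simp add: M_def)
  from i have one: "i < ?n" "z ! i" by (auto simp: ones_def)
  let ?m = "mate z i"
  have "?m \<in> ones (f z)" using i by (simp add: ones_f)
  then have m: "?m < length (f z)" "f z ! ?m" by (auto simp: ones_def)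
  have "mate (f z) ?m \<in> ones z" using y.ones_f m ff by (auto simp: ones_def)
  moreover have "cyc_rank ?n u i < cyc_rank ?n u (mate (f z) ?m)"
    using cyc_rank_mate[OF one u] y.cyc_rank_mate[OF m] u(1) \<open>\<not> matched (f z) u\<close>
    by (simp add: less_trans)
  ultimately show False using greatest i(2) by fastforce
qed

end

lemma funpow_in_bij_betw: "bij_betw g A A \<Longrightarrow> x \<in> A \<Longrightarrow> (g ^^ i) x \<in> A"
  by (induction i) (auto simp: bij_betw_def)

lemma funpow_eq_imp_period:
  assumes "bij_betw g A A" "x \<in> A" "i \<le> j" "(g ^^ i) x = (g ^^ j) x"
  shows "(g ^^ (j - i)) x = x"
proof -
  have "(g ^^ i) ((g ^^ (j - i)) x) = (g ^^ (i + (j - i))) x"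
    by (simp add: funpow_add)
  also have "\<dots> = (g ^^ i) x" using assms(3,4) by simp
  finally have "(g ^^ i) ((g ^^ (j - i)) x) = (g ^^ i) x" .
  then show ?thesis
    using bij_betw_imp_inj_on[OF bij_betw_funpow[OF assms(1)]] funpow_in_bij_betw[OF assms(1,2)]
      assms(2) by (auto dest: inj_onD)
qed

lemma bij_betw_funpow_period:
  assumes "finite A" "bij_betw g A A" "x \<in> A"
  shows "\<exists>p. 0 < p \<and> (g ^^ p) x = x"
proof -
  have "(\<lambda>i. (g ^^ i) x) ` {..card A} \<subseteq> A" using funpow_in_bij_betw[OF assms(2,3)] by auto
  then have "\<not> inj_on (\<lambda>i. (g ^^ i) x) {..card A}"
    using card_inj_on_le[of _ "{..card A}" A] assms(1) by fastforce
  then obtain i j where "i \<noteq> j" "(g ^^ i) x = (g ^^ j) x"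
    unfolding inj_on_def by blast
  then obtain i j where "i < j" "(g ^^ i) x = (g ^^ j) x"
    by (cases "i < j") (auto simp: not_less_iff_gr_or_eq)
  then show ?thesis
    using funpow_eq_imp_period[OF assms(2,3)] by (intro exI[of _ "j - i"]) auto
qed

lemma bij_betw_funpow_cycle:
  assumes "finite A" "bij_betw g A A" "x \<in> A"
  obtains p where "0 < p" "(g ^^ p) x = x"
    "\<And>i j. i < p \<Longrightarrow> j < p \<Longrightarrow> (g ^^ i) x = (g ^^ j) x \<Longrightarrow> i = j"
proof -
  define p where "p = (LEAST p. 0 < p \<and> (g ^^ p) x = x)"
  have p: "0 < p \<and> (g ^^ p) x = x"
    unfolding p_def using bij_betw_funpow_period[OF assms] by (rule LeastI_ex)
  have ordered: "i = j" if "i \<le> j" "j < p" "(g ^^ i) x = (g ^^ j) x" for i j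
  proof (rule ccontr)
    assume "i \<noteq> j"
    then have "0 < j - i \<and> (g ^^ (j - i)) x = x"
      using funpow_eq_imp_period[OF assms(2,3) that(1,3)] that(1) by simp
    moreover have "j - i < p" using that(2) by simp
    ultimately show False
      using not_less_Least[of "j - i" "\<lambda>p. 0 < p \<and> (g ^^ p) x = x"] unfolding p_def by blast
  qed
  have "i = j" if "i < p" "j < p" "(g ^^ i) x = (g ^^ j) x" for i j
    using ordered[of i j] ordered[of j i] that by (cases "i \<le> j") auto
  then show thesis using that p by blast
qed

lemma funpow_returns:
  assumes "finite A" "bij_betw g A A" "x \<in> A"
  shows "\<exists>c. x = (g ^^ c) ((g ^^ i) x)"
proof -
  obtain p where p: "0 < p" "(g ^^ p) x = x"
    using bij_betw_funpow_period[OF assms] by blast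
  have "(g ^^ (p * i)) x = x"
    using p(2) by (induction i) (simp_all add: funpow_add)
  moreover have "(g ^^ (p * i - i)) ((g ^^ i) x) = (g ^^ (p * i - i + i)) x"
    by (simp add: funpow_add)
  moreover have "p * i - i + i = p * i" using p(1) by simp
  ultimately have "x = (g ^^ (p * i - i)) ((g ^^ i) x)" by simp
  then show ?thesis ..
qed

lemma finite_X: "finite (X n k)"
proof (rule finite_subset)
  show "X n k \<subseteq> {xs. set xs \<subseteq> (UNIV :: bool set) \<and> length xs = n}" by (auto simp: X_def)
qed (rule finite_lists_length_eq, simp)

lemma sparse_word_X: "x \<in> X n k \<Longrightarrow> 2 * k < n \<Longrightarrow> sparse_word x"
  by unfold_locales (simp add: X_def)

lemma ones_nonempty_X: "x \<in> X n k \<Longrightarrow> 1 \<le> k \<Longrightarrow> ones x \<noteq> {}"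
  by (auto simp: X_def count_list_True_eq_card_ones)

lemma f_in_X: "x \<in> X n k \<Longrightarrow> 2 * k < n \<Longrightarrow> f x \<in> X n k"
  using sparse_word.count_list_f[OF sparse_word_X] by (simp add: X_def)

lemma bij_betw_f_X:
  assumes "2 * k < n"
  shows "bij_betw f (X n k) (X n k)"
proof -
  have "inj_on f (X n k)"
    using sparse_word_X[OF _ assms] f_inject by (intro inj_onI) (simp add: X_def)
  moreover have "f ` X n k \<subseteq> X n k" using f_in_X assms by blast
  ultimately show ?thesis
    using endo_inj_surj[OF finite_X] by (simp add: bij_betw_def)
qed

lemma f_cycle_X:
  assumes "1 \<le> k" "2 * k < n" "x \<in> X n k"
  shows "\<exists>p \<ge> 3. (f ^^ p) x = x
          \<and> (\<forall>i < p. \<forall>j < p. (f ^^ i) x = (f ^^ j) x \<longrightarrow> i = j)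
          \<and> (\<forall>i < p. (f ^^ i) x \<in> X n k \<and> kneser_adj ((f ^^ i) x) ((f ^^ Suc i) x))"
proof -
  interpret sparse_word x by (rule sparse_word_X[OF assms(3,2)])
  have ones: "ones x \<noteq> {}" by (rule ones_nonempty_X[OF assms(3,1)])
  obtain p where p: "0 < p" "(f ^^ p) x = x"
    and distinct: "\<And>i j. i < p \<Longrightarrow> j < p \<Longrightarrow> (f ^^ i) x = (f ^^ j) x \<Longrightarrow> i = j"
    using bij_betw_funpow_cycle[OF finite_X bij_betw_f_X[OF assms(2)] assms(3)] by blast
  have "p \<noteq> 1" using p f_neq[OF ones] by auto
  moreover have "p \<noteq> 2" using p f_f_neq[OF ones] by (auto simp: numeral_2_eq_2)
  ultimately have "3 \<le> p" using p(1) by linarith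
  moreover have "(f ^^ i) x \<in> X n k \<and> kneser_adj ((f ^^ i) x) ((f ^^ Suc i) x)" for i
    using funpow_in_bij_betw[OF bij_betw_f_X[OF assms(2)] assms(3)]
      sparse_word.kneser_adj_f[OF sparse_word_X[OF _ assms(2)]] by simp
  ultimately show ?thesis using p(2) distinct by blast
qed

lemma orbit_subset_X: "2 * k < n \<Longrightarrow> x \<in> X n k \<Longrightarrow> orbit x \<subseteq> X n k"
  using funpow_in_bij_betw[OF bij_betw_f_X] by (auto simp: orbit_def)

lemma self_in_orbit: "x \<in> orbit x"
  unfolding orbit_def by (metis (mono_tags) CollectI funpow_0)

lemma orbit_subset: "y \<in> orbit x \<Longrightarrow> orbit y \<subseteq> orbit x"
  unfolding orbit_def by (auto simp flip: funpow_add[THEN fun_cong, unfolded o_apply])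

lemma orbit_eq_if_meet:
  assumes "2 * k < n" "x \<in> X n k" "y \<in> X n k" "orbit x \<inter> orbit y \<noteq> {}"
  shows "orbit x = orbit y"
proof -
  have returns: "w \<in> orbit z" if "w \<in> X n k" "z \<in> orbit w" for w z
    using that funpow_returns[OF finite_X bij_betw_f_X[OF assms(1)]] by (auto simp: orbit_def)
  obtain z where "z \<in> orbit x" "z \<in> orbit y" using assms(4) by blast
  then show ?thesis
    using returns[OF assms(2)] returns[OF assms(3)] orbit_subset by (meson subset_antisym subsetD)
qed

theorem mainTheorem6:
  fixes n k :: nat
  assumes "k \<ge> 1" and "n \<ge> 2 * k + 1"
  shows "bij_betw f (X n k) (X n k)
    \<and> (\<forall>x \<in> X n k. kneser_adj x (f x) \<and> f x \<noteq> x \<and> f (f x) \<noteq> x)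
    \<and> (\<forall>x \<in> X n k. \<exists>p \<ge> 3. (f ^^ p) x = x
          \<and> (\<forall>i < p. \<forall>j < p. (f ^^ i) x = (f ^^ j) x \<longrightarrow> i = j)
          \<and> (\<forall>i < p. (f ^^ i) x \<in> X n k \<and> kneser_adj ((f ^^ i) x) ((f ^^ Suc i) x)))
    \<and> (\<forall>x \<in> X n k. orbit x \<subseteq> X n k)
    \<and> (\<forall>x \<in> X n k. \<forall>y \<in> X n k. orbit x \<inter> orbit y \<noteq> {} \<longrightarrow> orbit x = orbit y)
    \<and> (\<Union>x \<in> X n k. orbit x) = X n k"
proof -
  have nk: "2 * k < n" using assms(2) by simp
  have adjacent_distinct: "kneser_adj x (f x) \<and> f x \<noteq> x \<and> f (f x) \<noteq> x" if "x \<in> X n k" for x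
  proof -
    interpret sparse_word x by (rule sparse_word_X[OF that nk])
    show ?thesis using kneser_adj_f f_neq f_f_neq ones_nonempty_X[OF that assms(1)] by blast
  qed
  have union: "(\<Union>x \<in> X n k. orbit x) = X n k"
    using orbit_subset_X[OF nk] self_in_orbit by blast
  show ?thesis
    by (intro conjI ballI impI bij_betw_f_X[OF nk] f_cycle_X[OF assms(1) nk] orbit_subset_X[OF nk]
        orbit_eq_if_meet[OF nk] union) (simp_all add: adjacent_distinct)
qed

end
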